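(* Let $(\Omega,\mathcal{F},\mu)$ be a probability space and $\mathcal{C},\mathcal{G},\mathcal{H}$ sub-$\sigma$-algebras of $\mathcal{F}$ with $\mathcal{C}\subset\mathcal{G}$ and $\mathcal{C}\subset\mathcal{H}$. Let $f$ be an $\mathcal{H}$-measurable function with $|f|\le g$ a.e. for some (finite-valued) $\mathcal{C}$-measurable function $g$. Then, almost everywhere, $$\mathbb{E}\big[\,|\mathbb{E}[f|\mathcal{G}]-\mathbb{E}[f|\mathcal{C}]|\,\big|\,\mathcal{C}\big]\le 4\,\alpha_{\mathcal{C}}(\mathcal{G},\mathcal{H})\,g.$$
   Context: Functions are identified when equal a.e. Conditional expectations are understood in the generalized sense: for $f$ with $|f|\le g$, $g$ $\mathcal{C}$-measurable and $\mathcal{C}\subset\mathcal{G}$, $\mathbb{E}[f|\mathcal{G}]:=\lim_{n\to\infty}\mathbb{E}[f\mathbb{I}_{\{g\le n\}}|\mathcal{G}]$ a.e., and for nonnegative measurable $h$, $\mathbb{E}[h|\mathcal{C}]$ is defined by monotone convergence. The $\mathcal{C}$-conditioned strong mixing coefficient is $$\alpha_{\mathcal{C}}(\mathcal{G},\mathcal{H}):=\sup\{|\mathbb{E}[\mathbb{I}_A\mathbb{I}_B|\mathcal{C}]-\mathbb{E}[\mathbb{I}_A|\mathcal{C}]\,\mathbb{E}[\mathbb{I}_B|\mathcal{C}]| : A\in\mathcal{G},\ B\in\mathcal{H}\},$$ the supremum being the (essential) supremum in the lattice of a.e.-classes of measurable functions. *)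

theory Defs
  imports "HOL-Probability.Probability"
begin

definition trunc_fun :: "('a \<Rightarrow> real) \<Rightarrow> ('a \<Rightarrow> real) \<Rightarrow> nat \<Rightarrow> 'a \<Rightarrow> real" where
  "trunc_fun g f n = (\<lambda>x. f x * indicator {y. g y \<le> real n} x)"

text \<open>Generalized conditional expectation E[f|G] := lim_n E[f 1_{g<=n} | G] (pointwise,
  where the limit exists; set to 0 on the (null) set where it does not).\<close>
definition gen_cond_exp :: "'a measure \<Rightarrow> 'a measure \<Rightarrow> ('a \<Rightarrow> real) \<Rightarrow> ('a \<Rightarrow> real) \<Rightarrow> 'a \<Rightarrow> real" where
  "gen_cond_exp M G g f x =
     (if convergent (\<lambda>n. real_cond_exp M G (trunc_fun g f n) x)
      then lim (\<lambda>n. real_cond_exp M G (trunc_fun g f n) x) else 0)"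

definition cond_mix_dev :: "'a measure \<Rightarrow> 'a measure \<Rightarrow> 'a set \<Rightarrow> 'a set \<Rightarrow> 'a \<Rightarrow> real" where
  "cond_mix_dev M C A B x =
     \<bar>real_cond_exp M C (\<lambda>y. indicator A y * indicator B y) x
       - real_cond_exp M C (indicator A) x * real_cond_exp M C (indicator B) x\<bar>"

text \<open>h is the supremum of the family in the lattice of a.e.-classes of measurable functions.\<close>
definition is_cond_alpha :: "'a measure \<Rightarrow> 'a measure \<Rightarrow> 'a measure \<Rightarrow> 'a measure \<Rightarrow> ('a \<Rightarrow> real) \<Rightarrow> bool" where
  "is_cond_alpha M C G H h \<longleftrightarrow>
     h \<in> borel_measurable M \<and>
     (\<forall>A\<in>sets G. \<forall>B\<in>sets H. AE x in M. cond_mix_dev M C A B x \<le> h x) \<and>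
     (\<forall>h'\<in>borel_measurable M.
        (\<forall>A\<in>sets G. \<forall>B\<in>sets H. AE x in M. cond_mix_dev M C A B x \<le> h' x)
        \<longrightarrow> (AE x in M. h x \<le> h' x))"

definition cond_alpha :: "'a measure \<Rightarrow> 'a measure \<Rightarrow> 'a measure \<Rightarrow> 'a measure \<Rightarrow> 'a \<Rightarrow> real" where
  "cond_alpha M C G H = (SOME h. is_cond_alpha M C G H h)"

end

theory Submission
  imports Defs
begin

text \<open>
  Write \<open>u = E[f|G] - E[f|C]\<close> and \<open>A = {u \<ge> 0} \<in> G\<close>. Since \<open>C \<subseteq> G\<close>, \<open>E[u|C] = 0\<close> and
  \<open>E[1\<^sub>A u|C]\<close> is the conditional covariance \<open>Cov\<^sub>C(1\<^sub>A, f)\<close>, so \<open>E[|u| | C] = 2 Cov\<^sub>C(1\<^sub>A, f)\<close>.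
  By definition \<open>\<alpha>\<close> bounds \<open>|Cov\<^sub>C(1\<^sub>A, 1\<^sub>B)|\<close> for \<open>B \<in> H\<close>. An \<open>H\<close>-measurable \<open>\<psi>\<close> with values
  in \<open>[0,1]\<close> is uniformly within \<open>1/k\<close> of the average of the indicators of its level sets
  \<open>{\<psi> \<ge> j/k} \<in> H\<close>, whence \<open>|Cov\<^sub>C(1\<^sub>A, \<psi>)| \<le> \<alpha>\<close>. Rescaling to \<open>[-1,1]\<close> and writing
  \<open>f = g \<phi>\<close>, where the \<open>C\<close>-measurable factor \<open>g\<close> comes out of the conditional covariance,
  gives \<open>|Cov\<^sub>C(1\<^sub>A, f)| \<le> 2 \<alpha> g\<close>. For unbounded \<open>g\<close>, on the \<open>C\<close>-measurable set \<open>{g \<le> n}\<close> both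
  generalized conditional expectations coincide with the ordinary ones of the truncation
  \<open>f 1{g \<le> n}\<close>.

  The coefficient \<open>\<alpha>\<close> exists as an essential supremum: the deviations are bounded, so some
  countable subfamily maximizes the integral of its pointwise supremum, and that supremum then
  dominates every member of the family almost everywhere.
\<close>

section \<open>Essential suprema\<close>

lemma ex_countable_maximizer:
  fixes I :: "'b set \<Rightarrow> real"
  assumes mono: "\<And>S T. S \<subseteq> T \<Longrightarrow> countable T \<Longrightarrow> T \<subseteq> F \<Longrightarrow> I S \<le> I T"
    and bounded: "\<And>S. countable S \<Longrightarrow> S \<subseteq> F \<Longrightarrow> I S \<le> B"
  obtains T where "countable T" "T \<subseteq> F" "\<And>S. countable S \<Longrightarrow> S \<subseteq> F \<Longrightarrow> I S \<le> I T"
proof -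
  define V where "V = I ` {S. countable S \<and> S \<subseteq> F}"
  have "V \<noteq> {}" unfolding V_def by blast
  have "bdd_above V" unfolding V_def using bounded by (intro bdd_aboveI[of _ B]) auto
  have "\<exists>S. countable S \<and> S \<subseteq> F \<and> Sup V + - inverse (real (Suc n)) < I S" for n
  proof -
    have "Sup V + - inverse (real (Suc n)) < Sup V" by simp
    then show ?thesis using less_cSupE[OF _ \<open>V \<noteq> {}\<close>] unfolding V_def by blast
  qed
  then obtain S where S: "\<And>n. countable (S n)" "\<And>n. S n \<subseteq> F"
    "\<And>n. Sup V + - inverse (real (Suc n)) < I (S n)"
    by metis
  define T where "T = (\<Union>n. S n)"
  have T: "countable T" "T \<subseteq> F" using S unfolding T_def by auto
  have "Sup V \<le> I T"
  proof (rule LIMSEQ_le_const2[OF LIMSEQ_inverse_real_of_nat_add_minus], intro exI allI impI)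
    fix n
    have "I (S n) \<le> I T" using T by (intro mono) (auto simp: T_def)
    then show "Sup V + - inverse (real (Suc n)) \<le> I T" using S(3)[of n] by linarith
  qed
  moreover have "I S' \<le> Sup V" if "countable S'" "S' \<subseteq> F" for S'
    using \<open>bdd_above V\<close> that unfolding V_def by (intro cSup_upper) auto
  ultimately show ?thesis using T by (intro that) force+
qed

definition is_ess_sup :: "'a measure \<Rightarrow> ('a \<Rightarrow> real) set \<Rightarrow> ('a \<Rightarrow> real) \<Rightarrow> bool" where
  "is_ess_sup M F h \<longleftrightarrow> h \<in> borel_measurable M \<and> (\<forall>f\<in>F. AE x in M. f x \<le> h x) \<and>
     (\<forall>h'\<in>borel_measurable M. (\<forall>f\<in>F. AE x in M. f x \<le> h' x) \<longrightarrow> (AE x in M. h x \<le> h' x))"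

lemma (in finite_measure) ex_is_ess_sup:
  assumes "f0 \<in> F"
    and meas: "\<And>f. f \<in> F \<Longrightarrow> f \<in> borel_measurable M"
    and bounded: "\<And>f. f \<in> F \<Longrightarrow> AE x in M. \<bar>f x\<bar> \<le> K"
  shows "\<exists>h. is_ess_sup M F h"
proof -
  \<comment> \<open>Clamping to \<open>[-K, K]\<close> changes no member off a null set but bounds the family everywhere;
    inserting \<open>f0\<close> keeps the supremum away from the junk value of \<open>Sup {}\<close>.\<close>
  define cl where "cl f x = max (-K) (min K (f x))" for f :: "'a \<Rightarrow> real" and x
  define sp where "sp S x = (SUP f\<in>insert f0 S. cl f x)" for S x
  have cl_bound: "\<bar>cl f x\<bar> \<le> \<bar>K\<bar>" for f x unfolding cl_def by auto
  then have bdd: "bdd_above ((\<lambda>f. cl f x) ` S)" for S x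
    by (intro bdd_aboveI[of _ "\<bar>K\<bar>"]) (auto simp: abs_le_iff)
  have cl_ae: "AE x in M. cl f x = f x" if "f \<in> F" for f
    using bounded[OF that] by eventually_elim (auto simp: cl_def)
  have sp_upper: "cl f x \<le> sp S x" if "f \<in> insert f0 S" for f S x
    unfolding sp_def using that by (intro cSUP_upper bdd)
  have sp_mono: "sp S x \<le> sp T x" if "S \<subseteq> T" for S T x
    unfolding sp_def using that by (intro cSUP_subset_mono bdd) auto
  have sp_bound: "\<bar>sp S x\<bar> \<le> \<bar>K\<bar>" for S x
  proof -
    have "sp S x \<le> \<bar>K\<bar>"
      unfolding sp_def using cl_bound by (intro cSUP_least) (auto simp: abs_le_iff)
    moreover have "- \<bar>K\<bar> \<le> sp S x"
      using sp_upper[of f0 S x] cl_bound[of f0 x] by (simp add: abs_le_iff)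
    ultimately show ?thesis by (simp add: abs_le_iff)
  qed
  have sp_int: "integrable M (sp S)" if "countable S" "S \<subseteq> F" for S
  proof (rule integrable_const_bound[where B="\<bar>K\<bar>"])
    show "sp S \<in> borel_measurable M"
      unfolding sp_def cl_def using that \<open>f0 \<in> F\<close> meas
      by (intro borel_measurable_cSUP bdd[unfolded cl_def]) auto
  qed (simp add: sp_bound)
  obtain T where T: "countable T" "T \<subseteq> F"
    and T_max: "\<And>S. countable S \<Longrightarrow> S \<subseteq> F \<Longrightarrow> integral\<^sup>L M (sp S) \<le> integral\<^sup>L M (sp T)"
  proof (rule ex_countable_maximizer[where I="\<lambda>S. integral\<^sup>L M (sp S)" and F=F])
    show "integral\<^sup>L M (sp S) \<le> integral\<^sup>L M (sp T)" if "S \<subseteq> T" "countable T" "T \<subseteq> F" for S T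
      using that countable_subset[OF that(1,2)] by (intro integral_mono sp_int sp_mono) auto
    show "integral\<^sup>L M (sp S) \<le> \<bar>K\<bar> * measure M (space M)" if "countable S" "S \<subseteq> F" for S
      using integral_mono[OF sp_int[OF that] integrable_const, of "\<bar>K\<bar>"] sp_bound
      by (simp add: abs_le_iff mult.commute)
  qed blast
  have "is_ess_sup M F (sp T)"
    unfolding is_ess_sup_def
  proof (intro conjI ballI impI)
    show "sp T \<in> borel_measurable M" using sp_int[OF T] by auto
  next
    fix f assume "f \<in> F"
    have T': "countable (insert f T)" "insert f T \<subseteq> F" using T \<open>f \<in> F\<close> by auto
    have le: "sp T x \<le> sp (insert f T) x" for x by (rule sp_mono) blast
    have "integral\<^sup>L M (sp T) \<le> integral\<^sup>L M (sp (insert f T))"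
      using le by (intro integral_mono sp_int T T')
    with T_max[OF T'] have "integral\<^sup>L M (sp T) = integral\<^sup>L M (sp (insert f T))"
      by linarith
    then have "AE x in M. sp T x = sp (insert f T) x"
      using le by (intro integral_eq_mono_AE_eq_AE sp_int T T' AE_I2)
    then show "AE x in M. f x \<le> sp T x"
      using cl_ae[OF \<open>f \<in> F\<close>] by eventually_elim (metis insertCI sp_upper)
  next
    fix h' assume h': "\<forall>f\<in>F. AE x in M. f x \<le> h' x"
    have cl_le: "AE x in M. cl f x \<le> h' x" if "f \<in> F" for f
      using bspec[OF h' that] cl_ae[OF that] by eventually_elim simp
    have "AE x in M. \<forall>f\<in>insert f0 T. cl f x \<le> h' x"
      by (rule AE_ball_countable') (use cl_le T \<open>f0 \<in> F\<close> in auto)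
    then show "AE x in M. sp T x \<le> h' x"
      unfolding sp_def by eventually_elim (rule cSUP_least, auto)
  qed
  then show ?thesis by blast
qed

lemma is_cond_alpha_iff_is_ess_sup:
  "is_cond_alpha M C G H h \<longleftrightarrow> is_ess_sup M {cond_mix_dev M C A B | A B. A \<in> sets G \<and> B \<in> sets H} h"
proof -
  have ball_family: "(\<forall>f\<in>{cond_mix_dev M C A B | A B. A \<in> sets G \<and> B \<in> sets H}. P f)
      \<longleftrightarrow> (\<forall>A\<in>sets G. \<forall>B\<in>sets H. P (cond_mix_dev M C A B))" for P
    by blast
  show ?thesis unfolding is_cond_alpha_def is_ess_sup_def ball_family ..
qed

section \<open>Conditional covariance\<close>

definition ae_bounded :: "'a measure \<Rightarrow> ('a \<Rightarrow> real) \<Rightarrow> bool" where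
  "ae_bounded M f \<longleftrightarrow> f \<in> borel_measurable M \<and> (\<exists>K. AE x in M. \<bar>f x\<bar> \<le> K)"

lemma ae_boundedI: "f \<in> borel_measurable M \<Longrightarrow> AE x in M. \<bar>f x\<bar> \<le> K \<Longrightarrow> ae_bounded M f"
  unfolding ae_bounded_def by auto

lemma ae_bounded_measurable: "ae_bounded M f \<Longrightarrow> f \<in> borel_measurable M"
  unfolding ae_bounded_def by auto

lemma ae_bounded_const: "ae_bounded M (\<lambda>_. c)"
  by (rule ae_boundedI[where K="\<bar>c\<bar>"]) simp_all

lemma ae_bounded_indicator: "A \<in> sets M \<Longrightarrow> ae_bounded M (indicator A)"
  by (rule ae_boundedI[where K=1]) simp_all

lemma ae_bounded_mult:
  assumes "ae_bounded M f" "ae_bounded M g"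
  shows "ae_bounded M (\<lambda>x. f x * g x)"
proof -
  obtain K L where "AE x in M. \<bar>f x\<bar> \<le> K" "AE x in M. \<bar>g x\<bar> \<le> L"
    using assms unfolding ae_bounded_def by blast
  then have "AE x in M. \<bar>f x * g x\<bar> \<le> K * L"
    by eventually_elim (simp add: abs_mult mult_mono')
  then show ?thesis
    by (rule ae_boundedI[OF borel_measurable_times[OF ae_bounded_measurable[OF assms(1)]
          ae_bounded_measurable[OF assms(2)]]])
qed

lemma ae_bounded_diff:
  assumes "ae_bounded M f" "ae_bounded M g"
  shows "ae_bounded M (\<lambda>x. f x - g x)"
proof -
  obtain K L where "AE x in M. \<bar>f x\<bar> \<le> K" "AE x in M. \<bar>g x\<bar> \<le> L"
    using assms unfolding ae_bounded_def by blast
  then have "AE x in M. \<bar>f x - g x\<bar> \<le> K + L"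
    by eventually_elim linarith
  then show ?thesis
    by (rule ae_boundedI[OF borel_measurable_diff[OF ae_bounded_measurable[OF assms(1)]
          ae_bounded_measurable[OF assms(2)]]])
qed

lemma (in finite_measure) ae_bounded_integrable:
  assumes "ae_bounded M f"
  shows "integrable M f"
proof -
  obtain K where "AE x in M. \<bar>f x\<bar> \<le> K" using assms unfolding ae_bounded_def by blast
  then show ?thesis
    by (intro integrable_const_bound[where B=K] ae_bounded_measurable assms) simp
qed

context sigma_finite_subalgebra
begin

lemma abs_real_cond_exp_le:
  assumes "integrable M f" "AE x in M. \<bar>f x\<bar> \<le> c"
  shows "AE x in M. \<bar>real_cond_exp M F f x\<bar> \<le> c"
proof -
  have "AE x in M. real_cond_exp M F f x \<le> c" using assms by (intro real_cond_exp_le_c) auto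
  moreover have "AE x in M. - c \<le> real_cond_exp M F f x" using assms by (intro real_cond_exp_ge_c) auto
  ultimately show ?thesis by eventually_elim auto
qed

end

definition cond_cov :: "'a measure \<Rightarrow> 'a measure \<Rightarrow> ('a \<Rightarrow> real) \<Rightarrow> ('a \<Rightarrow> real) \<Rightarrow> 'a \<Rightarrow> real" where
  "cond_cov M F a b x =
     real_cond_exp M F (\<lambda>y. a y * b y) x - real_cond_exp M F a x * real_cond_exp M F b x"

lemma cond_mix_dev_eq_abs_cond_cov:
  "cond_mix_dev M C A B x = \<bar>cond_cov M C (indicator A) (indicator B) x\<bar>"
  unfolding cond_mix_dev_def cond_cov_def ..

context finite_measure_subalgebra
begin

lemma cond_cov_cong_right:
  assumes "AE x in M. b x = b' x" "ae_bounded M a" "ae_bounded M b" "ae_bounded M b'"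
  shows "AE x in M. cond_cov M F a b x = cond_cov M F a b' x"
proof -
  have "AE x in M. real_cond_exp M F b x = real_cond_exp M F b' x"
    using assms by (intro real_cond_exp_cong) (auto intro: ae_bounded_measurable)
  moreover have "AE x in M. real_cond_exp M F (\<lambda>y. a y * b y) x = real_cond_exp M F (\<lambda>y. a y * b' y) x"
    using assms by (intro real_cond_exp_cong) (auto intro: ae_bounded_measurable ae_bounded_mult)
  ultimately show ?thesis unfolding cond_cov_def by eventually_elim simp
qed

lemma cond_cov_diff_right:
  assumes "ae_bounded M a" "ae_bounded M b" "ae_bounded M b'"
  shows "AE x in M. cond_cov M F a (\<lambda>y. b y - b' y) x = cond_cov M F a b x - cond_cov M F a b' x"
proof -
  have "AE x in M. real_cond_exp M F (\<lambda>y. b y - b' y) x = real_cond_exp M F b x - real_cond_exp M F b' x"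
    using assms by (intro real_cond_exp_diff ae_bounded_integrable)
  moreover have "AE x in M. real_cond_exp M F (\<lambda>y. a y * b y - a y * b' y) x
      = real_cond_exp M F (\<lambda>y. a y * b y) x - real_cond_exp M F (\<lambda>y. a y * b' y) x"
    using assms by (intro real_cond_exp_diff ae_bounded_integrable ae_bounded_mult)
  ultimately show ?thesis unfolding cond_cov_def by eventually_elim (simp add: right_diff_distrib)
qed

lemma cond_cov_mult_right:
  assumes "c \<in> borel_measurable F" "ae_bounded M c" "ae_bounded M a" "ae_bounded M b"
  shows "AE x in M. cond_cov M F a (\<lambda>y. c y * b y) x = c x * cond_cov M F a b x"
proof -
  have "AE x in M. real_cond_exp M F (\<lambda>y. c y * b y) x = c x * real_cond_exp M F b x"
    using assms(2-) by (intro real_cond_exp_mult[OF assms(1)] ae_bounded_integrable ae_bounded_mult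
        ae_bounded_measurable)
  moreover have "AE x in M. real_cond_exp M F (\<lambda>y. c y * (a y * b y)) x
      = c x * real_cond_exp M F (\<lambda>y. a y * b y) x"
    using assms(2-) by (intro real_cond_exp_mult[OF assms(1)] ae_bounded_integrable ae_bounded_mult
        ae_bounded_measurable)
  ultimately show ?thesis unfolding cond_cov_def by eventually_elim (simp add: algebra_simps)
qed

lemma cond_cov_const_right:
  assumes "ae_bounded M a"
  shows "AE x in M. cond_cov M F a (\<lambda>_. c) x = 0"
proof -
  have "AE x in M. cond_cov M F a (\<lambda>_. c * 1) x = c * cond_cov M F a (\<lambda>_. 1) x"
    using assms by (intro cond_cov_mult_right ae_bounded_const) auto
  moreover have "AE x in M. real_cond_exp M F (\<lambda>_. 1) x = 1"
    by (intro real_cond_exp_F_meas ae_bounded_integrable ae_bounded_const) auto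
  ultimately show ?thesis unfolding cond_cov_def by eventually_elim simp
qed

lemma cond_cov_sum_right:
  assumes "ae_bounded M a" "\<And>j. ae_bounded M (b j)"
  shows "AE x in M. cond_cov M F a (\<lambda>y. \<Sum>j\<in>J. b j y) x = (\<Sum>j\<in>J. cond_cov M F a (b j) x)"
proof -
  have "AE x in M. real_cond_exp M F (\<lambda>y. \<Sum>j\<in>J. b j y) x = (\<Sum>j\<in>J. real_cond_exp M F (b j) x)"
    using assms by (intro real_cond_exp_sum ae_bounded_integrable)
  moreover have "AE x in M. real_cond_exp M F (\<lambda>y. \<Sum>j\<in>J. a y * b j y) x
      = (\<Sum>j\<in>J. real_cond_exp M F (\<lambda>y. a y * b j y) x)"
    using assms by (intro real_cond_exp_sum ae_bounded_integrable ae_bounded_mult)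
  ultimately show ?thesis
    unfolding cond_cov_def by eventually_elim (simp add: sum_distrib_left sum_subtractf)
qed

lemma abs_cond_cov_le:
  assumes "ae_bounded M a" "ae_bounded M b"
    and "AE x in M. \<bar>a x\<bar> \<le> 1" "AE x in M. \<bar>b x\<bar> \<le> e"
  shows "AE x in M. \<bar>cond_cov M F a b x\<bar> \<le> 2 * e"
proof -
  have "AE x in M. \<bar>a x * b x\<bar> \<le> e"
    using assms(3,4)
  proof eventually_elim
    case (elim x)
    have "\<bar>a x\<bar> * \<bar>b x\<bar> \<le> 1 * e" by (rule mult_mono) (use elim in auto)
    then show ?case by (simp add: abs_mult)
  qed
  then have "AE x in M. \<bar>real_cond_exp M F (\<lambda>y. a y * b y) x\<bar> \<le> e"
    using assms by (intro abs_real_cond_exp_le ae_bounded_integrable ae_bounded_mult)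
  moreover have "AE x in M. \<bar>real_cond_exp M F a x\<bar> \<le> 1"
    using assms(1,3) by (intro abs_real_cond_exp_le ae_bounded_integrable)
  moreover have "AE x in M. \<bar>real_cond_exp M F b x\<bar> \<le> e"
    using assms(2,4) by (intro abs_real_cond_exp_le ae_bounded_integrable)
  ultimately show ?thesis unfolding cond_cov_def
  proof eventually_elim
    case (elim x)
    then have "\<bar>real_cond_exp M F a x * real_cond_exp M F b x\<bar> \<le> 1 * e"
      unfolding abs_mult by (intro mult_mono) auto
    with elim(1) show ?case by linarith
  qed
qed

end

context sigma_finite_subalgebra
begin

lemma real_cond_exp_nested_diff_eq_0:
  assumes "subalgebra M G" "subalgebra G F" "integrable M f"
  shows "AE x in M. real_cond_exp M F (\<lambda>y. real_cond_exp M G f y - real_cond_exp M F f y) x = 0"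
proof -
  interpret G: sigma_finite_subalgebra M G by (rule nested_subalg_is_sigma_finite[OF assms(1,2)])
  have "AE x in M. real_cond_exp M F (\<lambda>y. real_cond_exp M G f y - real_cond_exp M F f y) x
      = real_cond_exp M F (real_cond_exp M G f) x - real_cond_exp M F (real_cond_exp M F f) x"
    using assms by (intro real_cond_exp_diff G.real_cond_exp_int real_cond_exp_int)
  moreover have "AE x in M. real_cond_exp M F (real_cond_exp M G f) x = real_cond_exp M F f x"
    using assms by (rule real_cond_exp_nested_subalg)
  moreover have "AE x in M. real_cond_exp M F (real_cond_exp M F f) x = real_cond_exp M F f x"
    using assms by (intro real_cond_exp_F_meas real_cond_exp_int) auto
  ultimately show ?thesis by eventually_elim simp
qed

lemma real_cond_exp_indicator_mult_nested_diff:
  assumes "subalgebra M G" "subalgebra G F" "integrable M f" "A \<in> sets G"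
  shows "AE x in M. real_cond_exp M F (\<lambda>y. indicator A y * (real_cond_exp M G f y - real_cond_exp M F f y)) x
           = cond_cov M F (indicator A) f x"
proof -
  interpret G: sigma_finite_subalgebra M G by (rule nested_subalg_is_sigma_finite[OF assms(1,2)])
  have [measurable]: "A \<in> sets G" "A \<in> sets M" "f \<in> borel_measurable M"
    using assms by (auto simp: subalgebra_def)
  have int_ind: "integrable M (\<lambda>y. indicator A y * h y)" if "integrable M h" for h :: "'a \<Rightarrow> real"
    using integrable_real_mult_indicator[OF \<open>A \<in> sets M\<close> that] by (simp add: mult.commute)
  have int_EG: "integrable M (real_cond_exp M G f)" and int_EF: "integrable M (real_cond_exp M F f)"
    using assms(3) by (rule G.real_cond_exp_int real_cond_exp_int)+
  have "AE x in M. real_cond_exp M F (\<lambda>y. indicator A y * real_cond_exp M G f y - indicator A y * real_cond_exp M F f y) x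
      = real_cond_exp M F (\<lambda>y. indicator A y * real_cond_exp M G f y) x
        - real_cond_exp M F (\<lambda>y. indicator A y * real_cond_exp M F f y) x"
    by (rule real_cond_exp_diff[OF int_ind[OF int_EG] int_ind[OF int_EF]])
  moreover have "AE x in M. real_cond_exp M F (\<lambda>y. indicator A y * real_cond_exp M G f y) x
      = real_cond_exp M F (real_cond_exp M G (\<lambda>y. indicator A y * f y)) x"
  proof (rule real_cond_exp_cong)
    show "AE x in M. indicator A x * real_cond_exp M G f x = real_cond_exp M G (\<lambda>y. indicator A y * f y) x"
      by (rule AE_symmetric[OF G.real_cond_exp_mult[OF borel_measurable_indicator[OF \<open>A \<in> sets G\<close>]
            \<open>f \<in> borel_measurable M\<close> int_ind[OF assms(3)]]])
  qed (rule borel_measurable_integrable[OF int_ind[OF int_EG]] borel_measurable_cond_exp2)+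
  moreover have "AE x in M. real_cond_exp M F (real_cond_exp M G (\<lambda>y. indicator A y * f y)) x
      = real_cond_exp M F (\<lambda>y. indicator A y * f y) x"
    using assms(1,2) int_ind[OF assms(3)] by (rule real_cond_exp_nested_subalg)
  moreover have "AE x in M. real_cond_exp M F (\<lambda>y. real_cond_exp M F f y * indicator A y) x
      = real_cond_exp M F f x * real_cond_exp M F (indicator A) x"
    by (rule real_cond_exp_mult[OF borel_measurable_cond_exp borel_measurable_indicator[OF \<open>A \<in> sets M\<close>]
          integrable_real_mult_indicator[OF \<open>A \<in> sets M\<close> int_EF]])
  ultimately show ?thesis
    unfolding cond_cov_def right_diff_distrib by eventually_elim (simp only: mult.commute)
qed

lemma real_cond_exp_abs_nested_diff:
  assumes "subalgebra M G" "subalgebra G F" "integrable M f"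
  obtains A where "A \<in> sets G"
    "AE x in M. real_cond_exp M F (\<lambda>y. \<bar>real_cond_exp M G f y - real_cond_exp M F f y\<bar>) x
       = 2 * cond_cov M F (indicator A) f x"
proof -
  define u where "u = (\<lambda>y. real_cond_exp M G f y - real_cond_exp M F f y)"
  define A where "A = {y \<in> space M. real_cond_exp M F f y \<le> real_cond_exp M G f y}"
  interpret G: sigma_finite_subalgebra M G by (rule nested_subalg_is_sigma_finite[OF assms(1,2)])
  have [measurable]: "real_cond_exp M F f \<in> borel_measurable G"
    by (rule measurable_from_subalg[OF assms(2) borel_measurable_cond_exp])
  have "space G = space M" using assms(1) by (simp add: subalgebra_def)
  then have AG: "A \<in> sets G" unfolding A_def by (simp flip: \<open>space G = space M\<close>)
  then have AM: "A \<in> sets M" using assms(1) by (auto simp: subalgebra_def)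
  have u_int: "integrable M u"
    unfolding u_def using assms by (intro Bochner_Integration.integrable_diff G.real_cond_exp_int real_cond_exp_int)
  have Au_int: "integrable M (\<lambda>y. indicator A y * u y)"
    using integrable_real_mult_indicator[OF AM u_int] by (simp add: mult.commute)
  have "AE x in M. \<bar>u x\<bar> = 2 * (indicator A x * u x) - u x"
    by (rule AE_I2) (auto simp: A_def u_def indicator_def)
  then have "AE x in M. real_cond_exp M F (\<lambda>y. \<bar>u y\<bar>) x = real_cond_exp M F (\<lambda>y. 2 * (indicator A y * u y) - u y) x"
    using u_int Au_int by (intro real_cond_exp_cong borel_measurable_integrable integrable_abs
        Bochner_Integration.integrable_diff integrable_mult_right)
  moreover have "AE x in M. real_cond_exp M F (\<lambda>y. 2 * (indicator A y * u y) - u y) x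
      = real_cond_exp M F (\<lambda>y. 2 * (indicator A y * u y)) x - real_cond_exp M F u x"
    using Au_int u_int by (intro real_cond_exp_diff integrable_mult_right)
  moreover have "AE x in M. real_cond_exp M F (\<lambda>y. 2 * (indicator A y * u y)) x
      = 2 * real_cond_exp M F (\<lambda>y. indicator A y * u y) x"
    using Au_int by (rule real_cond_exp_cmult)
  moreover have "AE x in M. real_cond_exp M F (\<lambda>y. indicator A y * u y) x = cond_cov M F (indicator A) f x"
    unfolding u_def using assms AG by (rule real_cond_exp_indicator_mult_nested_diff)
  moreover have "AE x in M. real_cond_exp M F u x = 0"
    unfolding u_def using assms by (rule real_cond_exp_nested_diff_eq_0)
  ultimately have "AE x in M. real_cond_exp M F (\<lambda>y. \<bar>u y\<bar>) x = 2 * cond_cov M F (indicator A) f x"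
    by eventually_elim simp
  with AG show ?thesis unfolding u_def by (rule that)
qed

end

section \<open>Bounds by the conditional mixing coefficient\<close>

lemma staircase_approx:
  fixes t :: real and k :: nat
  assumes "0 \<le> t" "t \<le> 1" "0 < k"
  shows "\<bar>t - inverse (real k) * (\<Sum>j\<in>{1..k}. if real j / real k \<le> t then 1 else 0)\<bar> \<le> inverse (real k)"
proof -
  define s where "s = real k * t"
  have s: "0 \<le> s" "s \<le> real k" using assms by (simp_all add: s_def mult_left_le)
  have "real j / real k \<le> t \<longleftrightarrow> real j \<le> s" for j
    using assms by (simp add: s_def pos_divide_le_eq mult.commute)
  also have "real j \<le> s \<longleftrightarrow> j \<le> nat \<lfloor>s\<rfloor>" for j
    using s by (simp add: le_nat_iff le_floor_iff)
  moreover have "nat \<lfloor>s\<rfloor> \<le> k" using s by linarith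
  ultimately have "{j \<in> {1..k}. real j / real k \<le> t} = {1..nat \<lfloor>s\<rfloor>}" by auto
  then have "(\<Sum>j\<in>{1..k}. if real j / real k \<le> t then 1 else 0) = (of_int \<lfloor>s\<rfloor> :: real)"
    using s by (simp flip: sum.inter_filter)
  moreover have "t - inverse (real k) * of_int \<lfloor>s\<rfloor> = inverse (real k) * (s - of_int \<lfloor>s\<rfloor>)"
    using assms by (simp add: s_def field_simps)
  moreover have "0 \<le> s - of_int \<lfloor>s\<rfloor>" "s - of_int \<lfloor>s\<rfloor> \<le> 1" by linarith+
  ultimately show ?thesis by (simp add: abs_mult mult_left_le)
qed

locale cond_mixing = finite_measure M for M :: "'a measure" +
  fixes C G H :: "'a measure"
  assumes subalg_C: "subalgebra M C" and subalg_G: "subalgebra M G" and subalg_H: "subalgebra M H"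
    and sets_C_G: "sets C \<subseteq> sets G" and sets_C_H: "sets C \<subseteq> sets H"
begin

sublocale C: finite_measure_subalgebra M C
  by unfold_locales (fact subalg_C)

sublocale G: finite_measure_subalgebra M G
  by unfold_locales (fact subalg_G)

abbreviation alpha :: "'a \<Rightarrow> real" where
  "alpha \<equiv> cond_alpha M C G H"

lemma subalgebra_G_C: "subalgebra G C"
  using subalg_C subalg_G sets_C_G by (simp add: subalgebra_def)

lemma subalgebra_H_C: "subalgebra H C"
  using subalg_C subalg_H sets_C_H by (simp add: subalgebra_def)

lemma sets_G_M: "A \<in> sets G \<Longrightarrow> A \<in> sets M"
  using subalg_G by (auto simp: subalgebra_def)

lemma sets_H_M: "A \<in> sets H \<Longrightarrow> A \<in> sets M"
  using subalg_H by (auto simp: subalgebra_def)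

text \<open>The choice in \<open>cond_alpha\<close> is not vacuous: the essential supremum exists.\<close>

lemma is_cond_alpha_cond_alpha: "is_cond_alpha M C G H alpha"
proof -
  let ?F = "{cond_mix_dev M C A B | A B. A \<in> sets G \<and> B \<in> sets H}"
  have "\<exists>h. is_ess_sup M ?F h"
  proof (rule ex_is_ess_sup)
    show "cond_mix_dev M C {} {} \<in> ?F" by blast
  next
    fix f assume "f \<in> ?F"
    then obtain A B where AB: "A \<in> sets G" "B \<in> sets H" "f = cond_mix_dev M C A B" by blast
    show "f \<in> borel_measurable M" unfolding AB(3) cond_mix_dev_def by measurable
    show "AE x in M. \<bar>f x\<bar> \<le> 2 * 1"
      unfolding AB(3) cond_mix_dev_eq_abs_cond_cov abs_abs using AB(1,2) sets_G_M sets_H_M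
      by (intro C.abs_cond_cov_le ae_bounded_indicator AE_I2) auto
  qed
  then show ?thesis unfolding cond_alpha_def is_cond_alpha_iff_is_ess_sup by (rule someI_ex)
qed

lemma abs_cond_cov_indicator_le_alpha:
  "A \<in> sets G \<Longrightarrow> B \<in> sets H \<Longrightarrow> AE x in M. \<bar>cond_cov M C (indicator A) (indicator B) x\<bar> \<le> alpha x"
  using is_cond_alpha_cond_alpha unfolding is_cond_alpha_def cond_mix_dev_eq_abs_cond_cov by blast

lemma abs_cond_cov_average_indicator_le_alpha:
  assumes A: "A \<in> sets G" and B: "\<And>j. B j \<in> sets H" and J: "finite J" "J \<noteq> {}"
  shows "AE x in M. \<bar>cond_cov M C (indicator A) (\<lambda>y. inverse (real (card J)) * (\<Sum>j\<in>J. indicator (B j) y)) x\<bar>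
           \<le> alpha x"
proof -
  have bounded_A: "ae_bounded M (indicator A)" using A by (intro ae_bounded_indicator sets_G_M)
  have B_M: "B j \<in> sets M" for j using B by (rule sets_H_M)
  then have bounded_B: "ae_bounded M (indicator (B j))" for j by (rule ae_bounded_indicator)
  have "ae_bounded M (\<lambda>y. \<Sum>j\<in>J. indicator (B j) y)"
  proof (rule ae_boundedI[where K="real (card J)"])
    show "(\<lambda>y. \<Sum>j\<in>J. indicator (B j) y :: real) \<in> borel_measurable M"
      by (rule borel_measurable_sum) (rule borel_measurable_indicator, rule B_M)
    have "\<bar>\<Sum>j\<in>J. indicator (B j) x\<bar> \<le> real (card J)" for x :: 'a
      using sum_bounded_above[of J "\<lambda>j. indicator (B j) x :: real" 1] by (simp add: sum_nonneg)
    then show "AE x in M. \<bar>\<Sum>j\<in>J. indicator (B j) x\<bar> \<le> real (card J)" by simp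
  qed
  then have "AE x in M. cond_cov M C (indicator A) (\<lambda>y. inverse (real (card J)) * (\<Sum>j\<in>J. indicator (B j) y)) x
      = inverse (real (card J)) * cond_cov M C (indicator A) (\<lambda>y. \<Sum>j\<in>J. indicator (B j) y) x"
    using bounded_A by (intro C.cond_cov_mult_right ae_bounded_const) auto
  moreover have "AE x in M. cond_cov M C (indicator A) (\<lambda>y. \<Sum>j\<in>J. indicator (B j) y) x
      = (\<Sum>j\<in>J. cond_cov M C (indicator A) (indicator (B j)) x)"
    using bounded_A bounded_B by (rule C.cond_cov_sum_right)
  moreover have "AE x in M. \<forall>j\<in>J. \<bar>cond_cov M C (indicator A) (indicator (B j)) x\<bar> \<le> alpha x"
    using A B J by (intro AE_ball_countable' abs_cond_cov_indicator_le_alpha countable_finite)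
  ultimately show ?thesis
  proof eventually_elim
    case (elim x)
    have "\<bar>\<Sum>j\<in>J. cond_cov M C (indicator A) (indicator (B j)) x\<bar>
        \<le> (\<Sum>j\<in>J. \<bar>cond_cov M C (indicator A) (indicator (B j)) x\<bar>)"
      by (rule sum_abs)
    also have "\<dots> \<le> (\<Sum>j\<in>J. alpha x)" using elim(3) by (intro sum_mono) blast
    finally have "inverse (real (card J)) * \<bar>\<Sum>j\<in>J. cond_cov M C (indicator A) (indicator (B j)) x\<bar>
        \<le> inverse (real (card J)) * (real (card J) * alpha x)"
      by (intro mult_left_mono) auto
    also have "\<dots> = alpha x" using J by (simp add: card_gt_0_iff)
    finally show ?case by (simp add: elim(1,2) abs_mult)
  qed
qed

lemma abs_cond_cov_unit_interval_le_alpha_add: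
  assumes A: "A \<in> sets G" and \<psi>: "\<psi> \<in> borel_measurable H"
    and \<psi>_01: "\<And>x. x \<in> space M \<Longrightarrow> 0 \<le> \<psi> x \<and> \<psi> x \<le> 1" and "0 < k"
  shows "AE x in M. \<bar>cond_cov M C (indicator A) \<psi> x\<bar> \<le> alpha x + 2 * inverse (real k)"
proof -
  define B where "B j = {y \<in> space M. real j / real k \<le> \<psi> y}" for j
  define p where "p = (\<lambda>y. inverse (real k) * (\<Sum>j\<in>{1..k}. indicator (B j) y))"
  have B_H: "B j \<in> sets H" for j
  proof -
    have "{y \<in> space H. real j / real k \<le> \<psi> y} \<in> sets H" using \<psi> by measurable
    then show ?thesis using subalg_H by (simp add: B_def subalgebra_def)
  qed
  have p_approx: "\<bar>\<psi> y - p y\<bar> \<le> inverse (real k)" if "y \<in> space M" for y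
  proof -
    have "p y = inverse (real k) * (\<Sum>j\<in>{1..k}. if real j / real k \<le> \<psi> y then 1 else 0)"
      unfolding p_def using that by (intro arg_cong[where f="\<lambda>s. inverse (real k) * s"] sum.cong)
        (auto simp: B_def)
    then show ?thesis by (simp only:) (rule staircase_approx, use \<psi>_01[OF that] \<open>0 < k\<close> in auto)
  qed
  have bounded_A: "ae_bounded M (indicator A)" using A by (intro ae_bounded_indicator sets_G_M)
  have bounded_\<psi>: "ae_bounded M \<psi>"
    using \<psi>_01 by (intro ae_boundedI[OF measurable_from_subalg[OF subalg_H \<psi>], where K=1] AE_I2) auto
  have bounded_p: "ae_bounded M p"
  proof (rule ae_boundedI[where K=2])
    show "p \<in> borel_measurable M"
      unfolding p_def using B_H
      by (intro borel_measurable_times borel_measurable_const borel_measurable_sum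
          borel_measurable_indicator sets_H_M)
    have "inverse (real k) \<le> 1" using \<open>0 < k\<close> by (auto simp: inverse_le_1_iff)
    then show "AE x in M. \<bar>p x\<bar> \<le> 2"
      using p_approx \<psi>_01 by (intro AE_I2) (fastforce simp: abs_le_iff)
  qed
  have "AE x in M. cond_cov M C (indicator A) (\<lambda>y. \<psi> y - p y) x
      = cond_cov M C (indicator A) \<psi> x - cond_cov M C (indicator A) p x"
    using bounded_A bounded_\<psi> bounded_p by (rule C.cond_cov_diff_right)
  moreover have "AE x in M. \<bar>cond_cov M C (indicator A) (\<lambda>y. \<psi> y - p y) x\<bar> \<le> 2 * inverse (real k)"
    using bounded_A bounded_\<psi> bounded_p p_approx
    by (intro C.abs_cond_cov_le ae_bounded_diff AE_I2) auto
  moreover have "AE x in M. \<bar>cond_cov M C (indicator A) p x\<bar> \<le> alpha x"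
    using abs_cond_cov_average_indicator_le_alpha[OF A B_H, of "{1..k}"] \<open>0 < k\<close> by (simp add: p_def)
  ultimately show ?thesis by eventually_elim linarith
qed

lemma abs_cond_cov_unit_interval_le_alpha:
  assumes A: "A \<in> sets G" and \<psi>: "\<psi> \<in> borel_measurable H"
    and \<psi>_01: "\<And>x. x \<in> space M \<Longrightarrow> 0 \<le> \<psi> x \<and> \<psi> x \<le> 1"
  shows "AE x in M. \<bar>cond_cov M C (indicator A) \<psi> x\<bar> \<le> alpha x"
proof -
  have "AE x in M. \<forall>k. 0 < k \<longrightarrow> \<bar>cond_cov M C (indicator A) \<psi> x\<bar> \<le> alpha x + 2 * inverse (real k)"
    using abs_cond_cov_unit_interval_le_alpha_add[OF A \<psi> \<psi>_01] by (simp add: AE_all_countable)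
  then show ?thesis
  proof eventually_elim
    case (elim x)
    have "(\<lambda>k. alpha x + 2 * inverse (real k)) \<longlonglongrightarrow> alpha x"
      using tendsto_add[OF tendsto_const tendsto_mult[OF tendsto_const lim_inverse_n]] by simp
    then show ?case by (rule LIMSEQ_le_const) (use elim in \<open>auto intro!: exI[of _ 1]\<close>)
  qed
qed

lemma abs_cond_cov_le_2_alpha:
  assumes A: "A \<in> sets G" and \<phi>: "\<phi> \<in> borel_measurable H"
    and \<phi>_bound: "\<And>x. x \<in> space M \<Longrightarrow> \<bar>\<phi> x\<bar> \<le> 1"
  shows "AE x in M. \<bar>cond_cov M C (indicator A) \<phi> x\<bar> \<le> 2 * alpha x"
proof -
  define \<psi> where "\<psi> = (\<lambda>y. (\<phi> y + 1) / 2)"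
  have \<psi>: "\<psi> \<in> borel_measurable H" unfolding \<psi>_def using \<phi> by measurable
  have \<psi>_01: "0 \<le> \<psi> x \<and> \<psi> x \<le> 1" if "x \<in> space M" for x
    using \<phi>_bound[OF that] by (simp add: \<psi>_def abs_le_iff)
  have bounded_A: "ae_bounded M (indicator A)" using A by (intro ae_bounded_indicator sets_G_M)
  have bounded_\<psi>: "ae_bounded M \<psi>"
    using \<psi>_01 measurable_from_subalg[OF subalg_H \<psi>] by (intro ae_boundedI[where K=1] AE_I2) auto
  have \<phi>_eq: "\<phi> = (\<lambda>y. 2 * \<psi> y - 1)" by (rule ext) (simp add: \<psi>_def field_simps)
  have "AE x in M. cond_cov M C (indicator A) (\<lambda>y. 2 * \<psi> y - 1) x
      = cond_cov M C (indicator A) (\<lambda>y. 2 * \<psi> y) x - cond_cov M C (indicator A) (\<lambda>_. 1) x"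
    using bounded_A bounded_\<psi> by (intro C.cond_cov_diff_right ae_bounded_mult ae_bounded_const)
  moreover have "AE x in M. cond_cov M C (indicator A) (\<lambda>y. 2 * \<psi> y) x = 2 * cond_cov M C (indicator A) \<psi> x"
    using bounded_A bounded_\<psi> by (intro C.cond_cov_mult_right ae_bounded_const) auto
  moreover have "AE x in M. cond_cov M C (indicator A) (\<lambda>_. 1) x = 0"
    using bounded_A by (rule C.cond_cov_const_right)
  moreover have "AE x in M. \<bar>cond_cov M C (indicator A) \<psi> x\<bar> \<le> alpha x"
    using A \<psi> \<psi>_01 by (rule abs_cond_cov_unit_interval_le_alpha)
  ultimately show ?thesis unfolding \<phi>_eq by eventually_elim (simp add: abs_mult)
qed

lemma abs_cond_cov_dominated_le:
  assumes A: "A \<in> sets G" and f: "f \<in> borel_measurable H" and g: "g \<in> borel_measurable C"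
    and f_le_g: "AE x in M. \<bar>f x\<bar> \<le> g x" and bounded_g: "ae_bounded M g"
  shows "AE x in M. \<bar>cond_cov M C (indicator A) f x\<bar> \<le> 2 * alpha x * g x"
proof -
  define \<phi> where "\<phi> = (\<lambda>y. max (-1) (min 1 (f y / g y)))"
  have \<phi>: "\<phi> \<in> borel_measurable H"
    unfolding \<phi>_def using f measurable_from_subalg[OF subalgebra_H_C g] by measurable
  have bounded_A: "ae_bounded M (indicator A)" using A by (intro ae_bounded_indicator sets_G_M)
  have bounded_\<phi>: "ae_bounded M \<phi>"
    using measurable_from_subalg[OF subalg_H \<phi>] by (intro ae_boundedI[where K=1] AE_I2) (auto simp: \<phi>_def)
  have bounded_f: "ae_bounded M f"
  proof -
    obtain K where "AE x in M. \<bar>g x\<bar> \<le> K" using bounded_g unfolding ae_bounded_def by blast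
    with f_le_g have "AE x in M. \<bar>f x\<bar> \<le> K" by eventually_elim linarith
    then show ?thesis by (rule ae_boundedI[OF measurable_from_subalg[OF subalg_H f]])
  qed
  have "AE x in M. f x = g x * \<phi> x"
    using f_le_g
  proof eventually_elim
    case (elim x)
    show ?case
    proof (cases "g x = 0")
      case False
      with elim have "0 < g x" "\<bar>f x / g x\<bar> \<le> 1"
        using abs_ge_zero[of "f x"] by (simp_all add: abs_div del: abs_le_iff)
      then have "- 1 \<le> f x / g x" "f x / g x \<le> 1" by (simp_all add: le_divide_eq divide_le_eq)
      with \<open>0 < g x\<close> show ?thesis by (simp add: \<phi>_def)
    qed (use elim in simp)
  qed
  then have "AE x in M. cond_cov M C (indicator A) f x = cond_cov M C (indicator A) (\<lambda>y. g y * \<phi> y) x"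
    using bounded_A bounded_f bounded_g bounded_\<phi> by (intro C.cond_cov_cong_right ae_bounded_mult)
  moreover have "AE x in M. cond_cov M C (indicator A) (\<lambda>y. g y * \<phi> y) x = g x * cond_cov M C (indicator A) \<phi> x"
    using g bounded_g bounded_A bounded_\<phi> by (rule C.cond_cov_mult_right)
  moreover have "AE x in M. \<bar>cond_cov M C (indicator A) \<phi> x\<bar> \<le> 2 * alpha x"
    using A \<phi> by (rule abs_cond_cov_le_2_alpha) (simp add: \<phi>_def)
  ultimately show ?thesis using f_le_g
  proof eventually_elim
    case (elim x)
    have "0 \<le> g x" using elim(4) abs_ge_zero[of "f x"] by linarith
    have "\<bar>cond_cov M C (indicator A) f x\<bar> = g x * \<bar>cond_cov M C (indicator A) \<phi> x\<bar>"
      using elim(1,2) \<open>0 \<le> g x\<close> by (simp add: abs_mult)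
    also have "\<dots> \<le> g x * (2 * alpha x)" using elim(3) \<open>0 \<le> g x\<close> by (rule mult_left_mono)
    finally show ?case by (simp add: mult_ac)
  qed
qed

lemma cond_exp_abs_diff_le_4_alpha:
  assumes f: "f \<in> borel_measurable H" and g: "g \<in> borel_measurable C"
    and f_le_g: "AE x in M. \<bar>f x\<bar> \<le> g x" and bounded_g: "ae_bounded M g"
  shows "AE x in M. real_cond_exp M C (\<lambda>y. \<bar>real_cond_exp M G f y - real_cond_exp M C f y\<bar>) x
           \<le> 4 * alpha x * g x"
proof -
  obtain K where "AE x in M. \<bar>g x\<bar> \<le> K" using bounded_g unfolding ae_bounded_def by blast
  with f_le_g have "AE x in M. \<bar>f x\<bar> \<le> K" by eventually_elim linarith
  then have "integrable M f"
    by (intro ae_bounded_integrable ae_boundedI[OF measurable_from_subalg[OF subalg_H f]])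
  then obtain A where A: "A \<in> sets G" and abs_eq:
    "AE x in M. real_cond_exp M C (\<lambda>y. \<bar>real_cond_exp M G f y - real_cond_exp M C f y\<bar>) x
       = 2 * cond_cov M C (indicator A) f x"
    by (rule C.real_cond_exp_abs_nested_diff[OF subalg_G subalgebra_G_C])
  have "AE x in M. \<bar>cond_cov M C (indicator A) f x\<bar> \<le> 2 * alpha x * g x"
    using A f g f_le_g bounded_g by (rule abs_cond_cov_dominated_le)
  with abs_eq show ?thesis by eventually_elim (auto simp: abs_le_iff algebra_simps)
qed

end

section \<open>Truncation\<close>

lemma trunc_fun_eq: "trunc_fun g f n = (\<lambda>y. if g y \<le> real n then f y else 0)"
  by (auto simp: trunc_fun_def)

lemma trunc_fun_abs_le:
  assumes "AE x in M. \<bar>f x\<bar> \<le> g x"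
  shows "AE x in M. \<bar>trunc_fun g f n x\<bar> \<le> trunc_fun g g n x"
    and "AE x in M. \<bar>trunc_fun g g n x\<bar> \<le> real n"
proof -
  show "AE x in M. \<bar>trunc_fun g f n x\<bar> \<le> trunc_fun g g n x"
    using assms by eventually_elim (simp add: trunc_fun_eq)
  show "AE x in M. \<bar>trunc_fun g g n x\<bar> \<le> real n"
    using assms
  proof eventually_elim
    case (elim x)
    then have "0 \<le> g x" using abs_ge_zero[of "f x"] by linarith
    then show ?case by (simp add: trunc_fun_eq)
  qed
qed

lemma borel_measurable_gen_cond_exp [measurable]: "gen_cond_exp M F g f \<in> borel_measurable M"
proof -
  have [measurable]: "Measurable.pred M (\<lambda>x. convergent (\<lambda>n. real_cond_exp M F (trunc_fun g f n) x))"
    unfolding Cauchy_convergent_iff[symmetric] Cauchy_iff2 by measurable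
  show ?thesis unfolding gen_cond_exp_def[abs_def] by measurable
qed

lemma (in finite_measure_subalgebra) gen_cond_exp_eq_real_cond_exp_trunc:
  assumes g: "g \<in> borel_measurable F" and [measurable]: "f \<in> borel_measurable M"
    and f_le_g: "AE x in M. \<bar>f x\<bar> \<le> g x"
  shows "AE x in M. g x \<le> real n \<longrightarrow> gen_cond_exp M F g f x = real_cond_exp M F (trunc_fun g f n) x"
proof -
  have [measurable]: "g \<in> borel_measurable M" by (rule measurable_from_subalg[OF subalg g])
  have trunc_meas: "trunc_fun g f m \<in> borel_measurable M" for m
    unfolding trunc_fun_eq by measurable
  have int: "integrable M (trunc_fun g f m)" for m
  proof (intro ae_bounded_integrable ae_boundedI[OF trunc_meas])
    show "AE x in M. \<bar>trunc_fun g f m x\<bar> \<le> real m"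
      using f_le_g by eventually_elim (auto simp: trunc_fun_eq)
  qed
  have ind_F: "(\<lambda>y. if g y \<le> real n then 1 else 0 :: real) \<in> borel_measurable F"
    using g by measurable
  \<comment> \<open>For \<open>m \<ge> n\<close> the truncations differ by the \<open>F\<close>-measurable factor \<open>1{g \<le> n}\<close>, so on
    \<open>{g \<le> n}\<close> the conditional expectations of the truncations are eventually constant.\<close>
  have "AE x in M. real_cond_exp M F (trunc_fun g f n) x
      = (if g x \<le> real n then 1 else 0) * real_cond_exp M F (trunc_fun g f m) x" if "n \<le> m" for m
  proof -
    have eq: "trunc_fun g f n = (\<lambda>y. (if g y \<le> real n then 1 else 0) * trunc_fun g f m y)"
      using that by (intro ext) (simp add: trunc_fun_eq)
    show ?thesis
      unfolding eq by (rule real_cond_exp_mult[OF ind_F trunc_meas]) (use int[of n] eq in simp)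
  qed
  then have "AE x in M. \<forall>m\<ge>n. real_cond_exp M F (trunc_fun g f n) x
      = (if g x \<le> real n then 1 else 0) * real_cond_exp M F (trunc_fun g f m) x"
    by (simp add: AE_all_countable)
  then show ?thesis
  proof eventually_elim
    case (elim x)
    show ?case
    proof
      let ?E = "\<lambda>m. real_cond_exp M F (trunc_fun g f m) x"
      assume "g x \<le> real n"
      with elim have "\<forall>m\<ge>n. ?E m = ?E n" by simp
      then have "eventually (\<lambda>m. ?E m = ?E n) sequentially"
        unfolding eventually_sequentially by blast
      then have lim: "?E \<longlonglongrightarrow> ?E n" by (rule tendsto_eventually)
      show "gen_cond_exp M F g f x = real_cond_exp M F (trunc_fun g f n) x"
        using convergentI[OF lim] limI[OF lim] by (simp add: gen_cond_exp_def)
    qed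
  qed
qed

context sigma_finite_subalgebra
begin

lemma nn_cond_exp_ennreal_eq_real_cond_exp:
  assumes "integrable M h" "\<And>x. 0 \<le> h x"
  shows "AE x in M. nn_cond_exp M F (\<lambda>y. ennreal (h y)) x = ennreal (real_cond_exp M F h x)"
proof -
  have [measurable]: "h \<in> borel_measurable M" using assms(1) by auto
  have neg_part: "(\<lambda>y. ennreal (- h y)) = (\<lambda>_. 0)"
    using assms(2) by (simp add: ennreal_neg)
  have "(\<lambda>y. ennreal (h y)) \<in> borel_measurable M" by measurable
  then have "(\<integral>\<^sup>+ x. nn_cond_exp M F (\<lambda>y. ennreal (h y)) x \<partial>M) = (\<integral>\<^sup>+ x. ennreal (h x) \<partial>M)"
    using nn_cond_exp_intg[OF borel_measurable_const[of 1]] by simp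
  also have "\<dots> < \<infinity>"
    using assms by (simp add: integrable_iff_bounded)
  finally have "AE x in M. nn_cond_exp M F (\<lambda>y. ennreal (h y)) x \<noteq> \<infinity>"
    by (intro nn_integral_PInf_AE borel_measurable_nn_cond_exp2) simp
  moreover have "AE x in M. nn_cond_exp M F (\<lambda>_. 0) x = 0"
    by (rule AE_symmetric[OF nn_cond_exp_F_meas]) simp
  ultimately show ?thesis
    unfolding real_cond_exp_def neg_part by eventually_elim (simp add: ennreal_enn2real_if)
qed

lemma nn_cond_exp_mono_on:
  assumes [measurable]: "S \<in> sets F" "V \<in> borel_measurable M" "W \<in> borel_measurable M"
    and le: "AE x in M. x \<in> S \<longrightarrow> V x \<le> W x"
  shows "AE x in M. x \<in> S \<longrightarrow> nn_cond_exp M F V x \<le> nn_cond_exp M F W x"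
proof -
  have [measurable]: "S \<in> sets M" using assms(1) subalg by (auto simp: subalgebra_def)
  have "AE x in M. indicator S x * nn_cond_exp M F V x = nn_cond_exp M F (\<lambda>y. indicator S y * V y) x"
    by (rule nn_cond_exp_prod[OF borel_measurable_indicator[OF assms(1)] assms(2)])
  moreover have "AE x in M. indicator S x * V x \<le> W x"
    using le by eventually_elim (simp split: split_indicator)
  then have "AE x in M. nn_cond_exp M F (\<lambda>y. indicator S y * V y) x \<le> nn_cond_exp M F W x"
    by (rule nn_cond_exp_mono[OF _ _ assms(3)]) measurable
  ultimately show ?thesis by eventually_elim (auto split: split_indicator)
qed

end

lemma (in cond_mixing) nn_cond_exp_abs_diff_gen_cond_exp_le_on_level_set:
  assumes f: "f \<in> borel_measurable H" and g: "g \<in> borel_measurable C"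
    and f_le_g: "AE x in M. \<bar>f x\<bar> \<le> g x"
  shows "AE x in M. g x \<le> real n \<longrightarrow>
           nn_cond_exp M C (\<lambda>y. ennreal \<bar>gen_cond_exp M G g f y - gen_cond_exp M C g f y\<bar>) x
             \<le> ennreal (4 * alpha x * g x)"
proof -
  define V where "V = (\<lambda>y. ennreal \<bar>gen_cond_exp M G g f y - gen_cond_exp M C g f y\<bar>)"
  have V_M: "V \<in> borel_measurable M" unfolding V_def by measurable
  define S where "S = {x \<in> space M. g x \<le> real n}"
  define h where "h = (\<lambda>y. \<bar>real_cond_exp M G (trunc_fun g f n) y - real_cond_exp M C (trunc_fun g f n) y\<bar>)"
  have g_H: "g \<in> borel_measurable H" by (rule measurable_from_subalg[OF subalgebra_H_C g])
  have g_G: "g \<in> borel_measurable G" by (rule measurable_from_subalg[OF subalgebra_G_C g])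
  have f_M: "f \<in> borel_measurable M" by (rule measurable_from_subalg[OF subalg_H f])
  have "{x \<in> space C. g x \<le> real n} \<in> sets C" using g by measurable
  then have S_C: "S \<in> sets C" using subalg_C by (simp add: S_def subalgebra_def)
  have f_n: "trunc_fun g f n \<in> borel_measurable H" unfolding trunc_fun_eq using f g_H by measurable
  have g_n: "trunc_fun g g n \<in> borel_measurable C" unfolding trunc_fun_eq using g by measurable
  have bounded_g_n: "ae_bounded M (trunc_fun g g n)"
    using trunc_fun_abs_le(2)[OF f_le_g] by (rule ae_boundedI[OF measurable_from_subalg[OF subalg_C g_n]])
  note f_n_le = trunc_fun_abs_le(1)[OF f_le_g, of n]
  have "AE x in M. \<bar>trunc_fun g f n x\<bar> \<le> real n"
    using trunc_fun_abs_le(1,2)[OF f_le_g, of n] by eventually_elim (auto simp: abs_le_iff)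
  then have int_f_n: "integrable M (trunc_fun g f n)"
    by (intro ae_bounded_integrable ae_boundedI[OF measurable_from_subalg[OF subalg_H f_n]])
  then have h_int: "integrable M h"
    unfolding h_def by (intro integrable_abs Bochner_Integration.integrable_diff G.real_cond_exp_int C.real_cond_exp_int)
  then have h_M: "h \<in> borel_measurable M" by auto
  have "AE x in M. real_cond_exp M C h x \<le> 4 * alpha x * trunc_fun g g n x"
    unfolding h_def using f_n g_n f_n_le bounded_g_n by (rule cond_exp_abs_diff_le_4_alpha)
  moreover have "AE x in M. nn_cond_exp M C (\<lambda>y. ennreal (h y)) x = ennreal (real_cond_exp M C h x)"
    using h_int by (rule C.nn_cond_exp_ennreal_eq_real_cond_exp) (simp add: h_def)
  moreover have "AE x in M. x \<in> S \<longrightarrow> nn_cond_exp M C V x \<le> nn_cond_exp M C (\<lambda>y. ennreal (h y)) x"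
  proof (rule C.nn_cond_exp_mono_on[OF S_C])
    show "AE x in M. x \<in> S \<longrightarrow> V x \<le> ennreal (h x)"
      using G.gen_cond_exp_eq_real_cond_exp_trunc[OF g_G f_M f_le_g, of n]
        C.gen_cond_exp_eq_real_cond_exp_trunc[OF g f_M f_le_g, of n]
      by eventually_elim (simp add: S_def h_def V_def)
  qed (rule V_M measurable_compose[OF h_M measurable_ennreal])+
  ultimately have "AE x in M. g x \<le> real n \<longrightarrow> nn_cond_exp M C V x \<le> ennreal (4 * alpha x * g x)"
    using AE_space
  proof eventually_elim
    case (elim x)
    show ?case
    proof
      assume "g x \<le> real n"
      then have "nn_cond_exp M C V x \<le> nn_cond_exp M C (\<lambda>y. ennreal (h y)) x"
        using elim(3,4) by (simp add: S_def)
      also have "\<dots> = ennreal (real_cond_exp M C h x)" by (rule elim(2))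
      also have "\<dots> \<le> ennreal (4 * alpha x * g x)"
        using elim(1) \<open>g x \<le> real n\<close> by (intro ennreal_leI) (simp add: trunc_fun_eq)
      finally show "nn_cond_exp M C V x \<le> ennreal (4 * alpha x * g x)" .
    qed
  qed
  then show ?thesis unfolding V_def .
qed

theorem corollary4p8:
  fixes M C G H :: "'a measure" and f g :: "'a \<Rightarrow> real"
  assumes "prob_space M"
    and "subalgebra M C" and "subalgebra M G" and "subalgebra M H"
    and "sets C \<subseteq> sets G" and "sets C \<subseteq> sets H"
    and "f \<in> borel_measurable H"
    and "g \<in> borel_measurable C"
    and "AE x in M. \<bar>f x\<bar> \<le> g x"
  shows "AE x in M.
           nn_cond_exp M C (\<lambda>y. ennreal \<bar>gen_cond_exp M G g f y - gen_cond_exp M C g f y\<bar>) x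
             \<le> ennreal (4 * cond_alpha M C G H x * g x)"
proof -
  interpret prob_space M by fact
  interpret cond_mixing M C G H
    using assms(2-6) by unfold_locales auto
  have "AE x in M. \<forall>n. g x \<le> real n \<longrightarrow>
      nn_cond_exp M C (\<lambda>y. ennreal \<bar>gen_cond_exp M G g f y - gen_cond_exp M C g f y\<bar>) x
        \<le> ennreal (4 * alpha x * g x)"
    using nn_cond_exp_abs_diff_gen_cond_exp_le_on_level_set[OF assms(7-9)]
    by (subst AE_all_countable) blast
  then show ?thesis by eventually_elim (meson real_arch_simple)
qed

end
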